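(* Assume the identifiability condition: for $C_1,C_2\in\Theta^2$, $G_{C_1}=G_{C_2}$ if and only if $C_1=C_2$. Assume moreover that for every $C_0\in\Theta^2$, $$\inf\Big\{\rho(G_{C_0},G_{C_e}) : C_e\in\Theta^2,\ \exists x\in\mathbf X \text{ with } M_{C_e}(x)\neq M_{C_0}(x)\Big\}>0,$$ where $\rho$ is the Prohorov metric. Then there exists an allocation rule $\{\phi_\tau\}$ such that for every $C_0\in\Theta^2$, $\lim_{t\to\infty}\mathsf E_{C_0}\{T_{inf}(t)\}<\infty$ and $\lim_{t\to\infty}T_{inf}(t)<\infty$ $\mathsf P_{C_0}$-almost surely.
   Context: Two-armed bandit with side observations. $\Theta\subset\mathbb R$ is a parameter set and $\mathbf X\subset\mathbb R$. Known families: distributions $\{G_C\}_{C\in\Theta^2}$ on $\mathbf X$ and conditional distributions $\{F_\theta(dy\mid x)\}_{\theta\in\Theta}$ on $\mathbb R$. Under the (unknown) configuration $C_0=(\theta_1,\theta_2)\in\Theta^2$, the side observations $X_1,X_2,\dots$ are i.i.d. with law $G_{C_0}$, and for each arm $i\in\{1,2\}$ the pairs $(X_t,Y^i_t)$ are i.i.d. in $t$ with joint law $G_{C_0}(dx)F_{\theta_i}(dy\mid x)$ ($Y^i_t$ is the reward of arm $i$ at time $t$). An allocation rule is a sequence $\phi_t\in\{1,2\}$ where $\phi_t$ depends only on $X_1,\dots,X_t$ and the previously observed rewards $Y^{\phi_\tau}_\tau$, $\tau<t$. $\mathsf P_C,\mathsf E_C$ denote probability/expectation under configuration $C$. Write $1(C)=\theta_1$,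 $2(C)=\theta_2$ for $C=(\theta_1,\theta_2)$; $\mu_\theta(x)=\int y\,F_\theta(dy\mid x)$ (assumed finite); $M_C(x)=\arg\max_{i\in\{1,2\}}\mu_{i(C)}(x)$ is the preferred arm. The inferior sampling time is $T_{inf}(t)=\sum_{\tau=1}^t 1\{\phi_\tau\neq M_{C_0}(X_\tau)\}$. The Prohorov metric on distributions on $\mathbb R$ is $\rho(P,Q)=\inf\{\epsilon>0: P(A)\le Q(A^\epsilon)+\epsilon \text{ for all closed } A\subset\mathbb R\}$, where $A^\epsilon=\{x:\inf_{y\in A}|x-y|<\epsilon\}$. *)

theory Defs
  imports "HOL-Probability.Probability"
begin

definition prohorov :: "real measure \<Rightarrow> real measure \<Rightarrow> real" where
  "prohorov P Q = Inf {\<epsilon>. \<epsilon> > 0 \<and>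
     (\<forall>A. closed A \<longrightarrow> measure P A \<le> measure Q {x. \<exists>y\<in>A. \<bar>x - y\<bar> < \<epsilon>} + \<epsilon>)}"

definition mu :: "(real \<Rightarrow> real \<Rightarrow> real measure) \<Rightarrow> real \<Rightarrow> real \<Rightarrow> real" where
  "mu F \<theta> x = (\<integral>y. y \<partial>(F \<theta> x))"

definition pref_arm :: "(real \<Rightarrow> real \<Rightarrow> real measure) \<Rightarrow> real \<times> real \<Rightarrow> real \<Rightarrow> nat" where
  "pref_arm F C x = (if mu F (fst C) x \<ge> mu F (snd C) x then 1 else 2)"

text \<open>Conditional law used off the side-observation set (irrelevant, G is concentrated on Xs).\<close>
definition Fk :: "real set \<Rightarrow> (real \<Rightarrow> real \<Rightarrow> real measure) \<Rightarrow> real \<Rightarrow> real \<Rightarrow> real measure" where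
  "Fk Xs F \<theta> x = (if x \<in> Xs then F \<theta> x else return borel 0)"

definition step_law :: "real set \<Rightarrow> (real \<times> real \<Rightarrow> real measure) \<Rightarrow> (real \<Rightarrow> real \<Rightarrow> real measure)
    \<Rightarrow> real \<times> real \<Rightarrow> (real \<times> real \<times> real) measure" where
  "step_law Xs G F C = G C \<bind> (\<lambda>x. distr (Fk Xs F (fst C) x \<Otimes>\<^sub>M Fk Xs F (snd C) x) borel
                                        (\<lambda>(y1, y2). (x, y1, y2)))"

definition Omega :: "real set \<Rightarrow> (real \<times> real \<Rightarrow> real measure) \<Rightarrow> (real \<Rightarrow> real \<Rightarrow> real measure)
    \<Rightarrow> real \<times> real \<Rightarrow> (nat \<Rightarrow> real \<times> real \<times> real) measure" where
  "Omega Xs G F C = PiM UNIV (\<lambda>_::nat. step_law Xs G F C)"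

definition reward :: "real \<times> real \<times> real \<Rightarrow> nat \<Rightarrow> real" where
  "reward s a = (if a = 1 then fst (snd s) else snd (snd s))"

text \<open>An allocation rule: phi t xs ys is the arm pulled at time t, given the side observations
  xs 0, ..., xs t and the previously observed rewards ys 0, ..., ys (t-1).\<close>
definition allocation_rule :: "(nat \<Rightarrow> (nat \<Rightarrow> real) \<Rightarrow> (nat \<Rightarrow> real) \<Rightarrow> nat) \<Rightarrow> bool" where
  "allocation_rule phi \<longleftrightarrow>
     (\<forall>t xs ys. phi t xs ys \<in> {1, 2}) \<and>
     (\<forall>t xs ys xs' ys'. (\<forall>i\<le>t. xs i = xs' i) \<and> (\<forall>i<t. ys i = ys' i)
                        \<longrightarrow> phi t xs ys = phi t xs' ys') \<and>
     (\<forall>t. (\<lambda>(xs, ys). phi t xs ys) \<in>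
            (PiM UNIV (\<lambda>_::nat. borel) \<Otimes>\<^sub>M PiM UNIV (\<lambda>_::nat. borel)) \<rightarrow>\<^sub>M count_space UNIV)"

primrec acts_upto :: "(nat \<Rightarrow> (nat \<Rightarrow> real) \<Rightarrow> (nat \<Rightarrow> real) \<Rightarrow> nat) \<Rightarrow> (nat \<Rightarrow> real \<times> real \<times> real)
    \<Rightarrow> nat \<Rightarrow> nat list" where
  "acts_upto phi \<omega> 0 = []"
| "acts_upto phi \<omega> (Suc n) =
     (let as = acts_upto phi \<omega> n
      in as @ [phi n (\<lambda>i. fst (\<omega> i)) (\<lambda>i. if i < n then reward (\<omega> i) (as ! i) else 0)])"

definition action :: "(nat \<Rightarrow> (nat \<Rightarrow> real) \<Rightarrow> (nat \<Rightarrow> real) \<Rightarrow> nat) \<Rightarrow> (nat \<Rightarrow> real \<times> real \<times> real)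
    \<Rightarrow> nat \<Rightarrow> nat" where
  "action phi \<omega> t = acts_upto phi \<omega> (Suc t) ! t"

definition T_inf :: "(real \<Rightarrow> real \<Rightarrow> real measure) \<Rightarrow> real \<times> real
    \<Rightarrow> (nat \<Rightarrow> (nat \<Rightarrow> real) \<Rightarrow> (nat \<Rightarrow> real) \<Rightarrow> nat) \<Rightarrow> nat \<Rightarrow> (nat \<Rightarrow> real \<times> real \<times> real) \<Rightarrow> nat" where
  "T_inf F C0 phi t \<omega> = card {\<tau>. \<tau> < t \<and> action phi \<omega> \<tau> \<noteq> pref_arm F C0 (fst (\<omega> \<tau>))}"

end

theory Submission
  imports Defs
begin

text \<open>The allocation rule ignores the rewards. At time \<open>t\<close> it estimates the configuration from
  the first \<open>t + 1\<close> side observations alone, by a minimum-distance estimator: among the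
  configurations whose law fits the empirical distribution at level \<open>1 / j\<close> (a one-sided
  Prohorov-type inequality), it takes one with the largest \<open>j \<le> t\<close>. It then pulls the arm
  preferred under the estimate.

  Fix the true configuration \<open>C\<^sub>0\<close> and the separation constant \<open>\<delta>\<close>, and choose \<open>2 / J < \<delta>\<close>.
  Whenever the empirical frequencies of finitely many grid cells are \<open>\<eta>\<close>-close to their
  \<open>G\<^sub>C\<^sub>0\<close>-probabilities, \<open>C\<^sub>0\<close> itself fits at level \<open>1 / J\<close>, so the estimate is within Prohorov
  distance \<open>2 / J < \<delta>\<close> of \<open>G\<^sub>C\<^sub>0\<close>; by separation it then prefers the same arm as \<open>C\<^sub>0\<close>
  everywhere on \<open>X\<close>. By Hoeffding's inequality the exceptional events have probabilities
  decaying geometrically in \<open>t\<close>, so by a Borel--Cantelli argument the number of inferior pulls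
  is a.s. finite with finite expectation.\<close>

section \<open>Prohorov distance through thickenings\<close>

definition thickening :: "real set \<Rightarrow> real \<Rightarrow> real set" where
  "thickening B r = {x. \<exists>y\<in>B. \<bar>x - y\<bar> < r}"

lemma open_thickening: "open (thickening B r)"
proof -
  have "thickening B r = (\<Union>y\<in>B. ball y r)"
    by (auto simp: thickening_def dist_real_def abs_minus_commute)
  then show ?thesis by auto
qed

lemma thickening_in_borel [measurable]: "thickening B r \<in> sets borel"
  using open_thickening by (rule borel_open)

lemma thickening_thickening_subset: "thickening (thickening B r) s \<subseteq> thickening B (r + s)"
  by (force simp: thickening_def)

lemma thickening_Compl_thickening_subset: "thickening (- thickening A r) r \<subseteq> - A"
  by (force simp: thickening_def abs_minus_commute)

lemma prohorov_leI:
  assumes "\<epsilon> > 0" and "\<And>A. closed A \<Longrightarrow> measure P A \<le> measure Q (thickening A \<epsilon>) + \<epsilon>"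
  shows "prohorov P Q \<le> \<epsilon>"
  unfolding prohorov_def
  by (rule cInf_lower) (use assms in \<open>auto simp: thickening_def intro: bdd_belowI[of _ 0]\<close>)

lemma prohorov_le_if_common_fit:
  fixes e :: "real set \<Rightarrow> real"
  assumes P: "prob_space P" "sets P = sets borel" and Q: "prob_space Q" "sets Q = sets borel"
    and e_Compl: "\<And>B. e (- B) = 1 - e B"
    and fit_P: "\<And>B. e B \<le> measure P (thickening B c) + c"
    and fit_Q: "\<And>B. e B \<le> measure Q (thickening B b) + b"
    and "c > 0" "b \<ge> 0"
  shows "prohorov P Q \<le> c + b"
proof (rule prohorov_leI)
  interpret P: prob_space P by (fact P)
  interpret Q: prob_space Q by (fact Q)
  fix A :: "real set" assume "closed A"
  then have A: "A \<in> sets P" using P(2) by (simp add: borel_closed)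
  have "1 - e (thickening A c) \<le> measure P (thickening (- thickening A c) c) + c"
    using fit_P e_Compl by metis
  also have "\<dots> \<le> measure P (- A) + c"
    using thickening_Compl_thickening_subset[of A c] A P(2) by (intro add_right_mono P.finite_measure_mono) auto
  also have "measure P (- A) = 1 - measure P A"
    using P.prob_compl[OF A] sets_eq_imp_space_eq[OF P(2)] by (simp add: Compl_eq_Diff_UNIV)
  finally have "measure P A \<le> e (thickening A c) + c" by simp
  also have "e (thickening A c) \<le> measure Q (thickening (thickening A c) b) + b"
    by (fact fit_Q)
  also have "measure Q (thickening (thickening A c) b) \<le> measure Q (thickening A (c + b))"
    using thickening_thickening_subset Q(2) by (intro Q.finite_measure_mono) auto
  finally show "measure P A \<le> measure Q (thickening A (c + b)) + (c + b)" by simp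
qed (use assms in simp)

section \<open>A minimum-distance estimator\<close>

text \<open>Rounding the side observations down to the grid \<open>\<int> / (n + 1)\<close> makes the estimator a
  function of countably many values, hence measurable.\<close>

definition grid_floor :: "nat \<Rightarrow> real \<Rightarrow> int" where
  "grid_floor n x = \<lfloor>x * real (Suc n)\<rfloor>"

definition rounded_sample :: "nat \<Rightarrow> (nat \<Rightarrow> real) \<Rightarrow> int list" where
  "rounded_sample n xs = map (\<lambda>i. grid_floor n (xs i)) [0..<Suc n]"

definition empirical :: "nat \<Rightarrow> int list \<Rightarrow> real set \<Rightarrow> real" where
  "empirical n l B = (\<Sum>i<length l. indicator B (real_of_int (l ! i) / real (Suc n))) / real (length l)"

definition fits :: "(real \<times> real \<Rightarrow> real measure) \<Rightarrow> real \<times> real \<Rightarrow> nat \<Rightarrow> int list \<Rightarrow> real \<Rightarrow> bool"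
  where "fits G C n l b \<longleftrightarrow> (\<forall>B. empirical n l B \<le> measure (G C) (thickening B b) + b)"

definition fit_levels :: "real set \<Rightarrow> (real \<times> real \<Rightarrow> real measure) \<Rightarrow> nat \<Rightarrow> int list \<Rightarrow> nat set"
  where "fit_levels Theta G n l = {j \<in> {1..n}. \<exists>C \<in> Theta \<times> Theta. fits G C n l (1 / real j)}"

definition estimate :: "real set \<Rightarrow> (real \<times> real \<Rightarrow> real measure) \<Rightarrow> nat \<Rightarrow> int list \<Rightarrow> real \<times> real"
  where "estimate Theta G n l =
    (SOME C. C \<in> Theta \<times> Theta \<and> fits G C n l (1 / real (Max (fit_levels Theta G n l))))"

lemma empirical_Compl:
  assumes "length l > 0"
  shows "empirical n l (- B) = 1 - empirical n l B"
proof -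
  have "(\<Sum>i<length l. indicator (- B) (real_of_int (l ! i) / real (Suc n)) :: real)
      = (\<Sum>i<length l. 1 - indicator B (real_of_int (l ! i) / real (Suc n)))"
    by (intro sum.cong) (auto simp: indicator_def)
  with assms show ?thesis by (simp add: empirical_def sum_subtractf diff_divide_distrib)
qed

lemma estimate_fits:
  assumes "fit_levels Theta G n l \<noteq> {}"
  shows "estimate Theta G n l \<in> Theta \<times> Theta \<and>
    fits G (estimate Theta G n l) n l (1 / real (Max (fit_levels Theta G n l)))"
proof -
  have "Max (fit_levels Theta G n l) \<in> fit_levels Theta G n l"
    using assms by (intro Max_in) (auto simp: fit_levels_def)
  then have "\<exists>C. C \<in> Theta \<times> Theta \<and> fits G C n l (1 / real (Max (fit_levels Theta G n l)))"
    unfolding fit_levels_def by blast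
  then show ?thesis unfolding estimate_def by (rule someI_ex)
qed

lemma prohorov_estimate_le:
  assumes G_prob: "\<And>C. C \<in> Theta \<times> Theta \<Longrightarrow> prob_space (G C) \<and> sets (G C) = sets borel"
    and C0: "C0 \<in> Theta \<times> Theta" and J: "1 \<le> J" "J \<le> n"
    and fit: "fits G C0 n l (1 / real J)" and "length l > 0"
  shows "fit_levels Theta G n l \<noteq> {} \<and> estimate Theta G n l \<in> Theta \<times> Theta \<and>
    prohorov (G C0) (G (estimate Theta G n l)) \<le> 2 / real J"
proof -
  have J_level: "J \<in> fit_levels Theta G n l" using J fit C0 unfolding fit_levels_def by auto
  define m where "m = Max (fit_levels Theta G n l)"
  have "J \<le> m" unfolding m_def using J_level by (intro Max_ge) (auto simp: fit_levels_def)
  then have m: "0 < 1 / real m" "1 / real m \<le> 1 / real J" using J by (auto simp: frac_le)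
  have est: "estimate Theta G n l \<in> Theta \<times> Theta" "fits G (estimate Theta G n l) n l (1 / real m)"
    using estimate_fits[of Theta G n l] J_level unfolding m_def by auto
  have "prohorov (G C0) (G (estimate Theta G n l)) \<le> 1 / real J + 1 / real m"
    using G_prob[OF C0] G_prob[OF est(1)] empirical_Compl[OF \<open>length l > 0\<close>] fit est(2) m J
    by (intro prohorov_le_if_common_fit[where e = "empirical n l"]) (auto simp: fits_def)
  with m J_level est(1) show ?thesis by auto
qed

section \<open>Empirical frequencies of grid cells\<close>

definition grid_cell :: "real \<Rightarrow> int \<Rightarrow> real set" where
  "grid_cell w j = {x. \<lfloor>x / w\<rfloor> = j}"

definition grid_tail :: "real \<Rightarrow> nat \<Rightarrow> real set" where
  "grid_tail w N = {x. \<lfloor>x / w\<rfloor> \<notin> {- int N..int N}}"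

lemma grid_cell_in_borel [measurable]: "grid_cell w j \<in> sets borel"
  unfolding grid_cell_def by measurable

lemma grid_tail_in_borel [measurable]: "grid_tail w N \<in> sets borel"
proof -
  have "(\<lambda>x::real. \<lfloor>x / w\<rfloor>) \<in> borel \<rightarrow>\<^sub>M count_space UNIV" by measurable
  from measurable_sets[OF this, of "- {- int N..int N}"] show ?thesis
    by (simp add: grid_tail_def vimage_def)
qed

definition grid_partition :: "real \<Rightarrow> nat \<Rightarrow> real set set" where
  "grid_partition w N = insert (grid_tail w N) (grid_cell w ` {- int N..int N})"

lemma finite_grid_partition: "finite (grid_partition w N)"
  by (simp add: grid_partition_def)

lemma grid_partition_subset_borel: "grid_partition w N \<subseteq> sets borel"
  by (simp add: grid_partition_def image_subset_iff)

definition frequency :: "nat \<Rightarrow> 'a set \<Rightarrow> (nat \<Rightarrow> 'a) \<Rightarrow> real" where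
  "frequency n D xs = (\<Sum>i\<le>n. indicator D (xs i)) / real (Suc n)"

lemma grid_floor_bounds:
  "real_of_int (grid_floor n x) / real (Suc n) \<le> x \<and> x < real_of_int (grid_floor n x) / real (Suc n) + 1 / real (Suc n)"
proof -
  have "real_of_int (grid_floor n x) \<le> x * real (Suc n)" "x * real (Suc n) < real_of_int (grid_floor n x) + 1"
    unfolding grid_floor_def by linarith+
  then show ?thesis by (simp add: field_simps)
qed

lemma indicator_grid_point_le:
  fixes w :: real and n N :: nat and B :: "real set"
  defines "T \<equiv> {j \<in> {- int N..int N}. grid_cell w j \<inter> thickening B (1 / real (Suc n)) \<noteq> {}}"
  shows "indicator B (real_of_int (grid_floor n x) / real (Suc n))
    \<le> (\<Sum>j\<in>T. indicator (grid_cell w j) x) + (indicator (grid_tail w N) x :: real)"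
proof (cases "real_of_int (grid_floor n x) / real (Suc n) \<in> B")
  case False
  then show ?thesis by (simp add: sum_nonneg)
next
  case True
  have x: "x \<in> thickening B (1 / real (Suc n))"
    using True grid_floor_bounds[of n x] unfolding thickening_def by (intro CollectI bexI) auto
  have "finite T" unfolding T_def by (rule finite_subset[of _ "{- int N..int N}"]) auto
  show ?thesis
  proof (cases "\<lfloor>x / w\<rfloor> \<in> {- int N..int N}")
    case in_range: True
    then have "\<lfloor>x / w\<rfloor> \<in> T" using x unfolding T_def grid_cell_def by auto
    then have "indicator (grid_cell w \<lfloor>x / w\<rfloor>) x \<le> (\<Sum>j\<in>T. indicator (grid_cell w j) x :: real)"
      using \<open>finite T\<close> by (intro member_le_sum) auto
    with True show ?thesis by (simp add: grid_cell_def add_increasing2)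
  next
    case False
    with True show ?thesis by (simp add: grid_tail_def sum_nonneg)
  qed
qed

lemma grid_cells_near_subset:
  assumes "w > 0" "h \<le> w"
  shows "(\<Union>j \<in> {j. grid_cell w j \<inter> thickening B h \<noteq> {}}. grid_cell w j) \<subseteq> thickening B (2 * w)"
proof
  fix x assume "x \<in> (\<Union>j \<in> {j. grid_cell w j \<inter> thickening B h \<noteq> {}}. grid_cell w j)"
  then obtain j z y where x: "x \<in> grid_cell w j" and z: "z \<in> grid_cell w j" "y \<in> B" "\<bar>z - y\<bar> < h"
    unfolding thickening_def by blast
  have "\<lfloor>x / w\<rfloor> = \<lfloor>z / w\<rfloor>" using x z(1) unfolding grid_cell_def by simp
  then have "\<bar>x / w - z / w\<bar> < 1" by linarith
  then have "\<bar>x - z\<bar> < w" using assms(1) by (simp add: diff_divide_distrib[symmetric] abs_divide field_simps)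
  then show "x \<in> thickening B (2 * w)" using z assms(2) unfolding thickening_def by force
qed

lemma empirical_rounded_sample_le:
  assumes G0: "prob_space G0" "sets G0 = sets borel"
    and w: "w > 0" "1 / real (Suc n) \<le> w"
    and tail: "measure G0 (grid_tail w N) \<le> w"
    and eta: "\<eta> \<ge> 0" "real (2 * N + 2) * \<eta> \<le> w"
    and freq: "\<And>D. D \<in> grid_partition w N \<Longrightarrow>
      frequency n D xs \<le> measure G0 D + \<eta>"
  shows "empirical n (rounded_sample n xs) B \<le> measure G0 (thickening B (2 * w)) + 2 * w"
proof -
  interpret prob_space G0 by (fact G0(1))
  define T where "T = {j \<in> {- int N..int N}. grid_cell w j \<inter> thickening B (1 / real (Suc n)) \<noteq> {}}"
  have T: "T \<subseteq> {- int N..int N}" unfolding T_def by auto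
  then have "finite T" by (rule finite_subset) simp
  have "card T \<le> card {- int N..int N}" using T by (intro card_mono) auto
  then have card_T: "(real (card T) + 1) * \<eta> \<le> w"
    using eta by (intro order.trans[OF mult_right_mono eta(2)]) auto
  have "empirical n (rounded_sample n xs) B
      = (\<Sum>i\<le>n. indicator B (real_of_int (grid_floor n (xs i)) / real (Suc n))) / real (Suc n)"
    unfolding empirical_def rounded_sample_def lessThan_Suc_atMost[symmetric]
    by (intro arg_cong2[where f = "(/)"] sum.cong) (simp_all del: upt_Suc)
  also have "\<dots> \<le> (\<Sum>i\<le>n. (\<Sum>j\<in>T. indicator (grid_cell w j) (xs i)) + indicator (grid_tail w N) (xs i)) / real (Suc n)"
    unfolding T_def by (intro divide_right_mono sum_mono indicator_grid_point_le) auto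
  also have "\<dots> = (\<Sum>j\<in>T. frequency n (grid_cell w j) xs) + frequency n (grid_tail w N) xs"
    unfolding frequency_def sum.distrib add_divide_distrib sum_divide_distrib
    by (subst sum.swap) (rule refl)
  also have "\<dots> \<le> (\<Sum>j\<in>T. measure G0 (grid_cell w j) + \<eta>) + (measure G0 (grid_tail w N) + \<eta>)"
    using T by (intro add_mono sum_mono freq) (auto simp: grid_partition_def)
  finally have "empirical n (rounded_sample n xs) B
      \<le> (\<Sum>j\<in>T. measure G0 (grid_cell w j)) + (real (card T) + 1) * \<eta> + measure G0 (grid_tail w N)"
    by (simp add: sum.distrib distrib_right)
  moreover have "(\<Sum>j\<in>T. measure G0 (grid_cell w j)) = measure G0 (\<Union>j\<in>T. grid_cell w j)"
  proof (rule finite_measure_finite_Union[symmetric])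
    show "grid_cell w ` T \<subseteq> sets G0" using G0(2) by (simp add: image_subset_iff)
    show "disjoint_family_on (grid_cell w) T" by (auto simp: disjoint_family_on_def grid_cell_def)
  qed fact
  moreover have "measure G0 (\<Union>j\<in>T. grid_cell w j) \<le> measure G0 (thickening B (2 * w))"
    using grid_cells_near_subset[OF w] G0(2) by (intro finite_measure_mono) (auto simp: T_def)
  ultimately show ?thesis using card_T tail by linarith
qed

lemma measure_grid_tail_tendsto_0:
  assumes "finite_measure M" "sets M = sets borel" "w > 0"
  shows "(\<lambda>N. measure M (grid_tail w N)) \<longlonglongrightarrow> 0"
proof -
  interpret finite_measure M by fact
  have "decseq (grid_tail w)" unfolding decseq_def grid_tail_def by auto
  moreover have "(\<Inter>N. grid_tail w N) = {}"
  proof safe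
    fix x assume "x \<in> (\<Inter>N. grid_tail w N)"
    then have "x \<in> grid_tail w (nat \<bar>\<lfloor>x / w\<rfloor>\<bar>)" by blast
    then show "x \<in> {}" unfolding grid_tail_def by auto
  qed
  ultimately show ?thesis
    using Lim_measure_decseq[of "grid_tail w" M] assms(2) by (simp add: image_subset_iff)
qed

text \<open>Cells of width \<open>w = 1 / (2 J)\<close> are fine enough for a fit
  at level \<open>1 / J\<close>, \<open>N\<close> makes the tail negligible, and \<open>\<eta>\<close> makes the deviations of all \<open>2 N + 2\<close>
  cell frequencies add up to at most \<open>w\<close>.\<close>

lemma grid_parameters_exist:
  assumes "finite_measure M" "sets M = sets borel" "\<delta> > 0"
  obtains J N :: nat and w \<eta> :: real
  where "1 \<le> J" "2 / real J < \<delta>" "w = 1 / (2 * real J)" "measure M (grid_tail w N) \<le> w"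
    "\<eta> > 0" "real (2 * N + 2) * \<eta> \<le> w"
proof -
  obtain J0 :: nat where "2 / \<delta> < real J0" using reals_Archimedean2 by blast
  with \<open>\<delta> > 0\<close> have J: "1 \<le> Suc J0" "2 / real (Suc J0) < \<delta>" by (auto simp: field_simps)
  define w where "w = 1 / (2 * real (Suc J0))"
  have "w > 0" by (simp add: w_def)
  have "eventually (\<lambda>N. measure M (grid_tail w N) < w) sequentially"
    using measure_grid_tail_tendsto_0[OF assms(1,2) \<open>w > 0\<close>] \<open>w > 0\<close> by (rule order_tendstoD(2))
  then obtain N where "measure M (grid_tail w N) \<le> w"
    by (meson eventually_sequentially order_refl less_imp_le)
  with J w_def \<open>w > 0\<close> show thesis
    by (intro that[of "Suc J0" w N "w / real (2 * N + 2)"]) auto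
qed

section \<open>Hoeffding and Borel--Cantelli bounds\<close>

lemma indep_vars_coordinates:
  assumes "prob_space S"
  shows "prob_space.indep_vars (PiM UNIV (\<lambda>_::nat. S)) (\<lambda>_. S) (\<lambda>i \<omega>. \<omega> i) {..n}"
proof -
  interpret product_prob_space "\<lambda>_::nat. S" UNIV
    using assms by (simp add: product_prob_space_def product_prob_space_axioms_def
      product_sigma_finite_def prob_space_imp_sigma_finite)
  have "distr (PiM UNIV (\<lambda>_. S)) (PiM {..n} (\<lambda>_. S)) (\<lambda>x. \<lambda>i\<in>{..n}. x i) = PiM {..n} (\<lambda>_. S)"
    using distr_PiM_restrict_finite[of "{..n}"] by (simp add: restrict_def)
  also have "\<dots> = PiM {..n} (\<lambda>i. distr (PiM UNIV (\<lambda>_. S)) S (\<lambda>\<omega>. \<omega> i))"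
    using PiM_component by (intro PiM_cong) auto
  finally show ?thesis
    using assms by (subst prob_space.indep_vars_iff_distr_eq_PiM'[OF prob_space_PiM]) auto
qed

lemma prob_frequency_ge:
  assumes S: "prob_space S" and D: "D \<in> sets S" and "\<eta> \<ge> 0"
  shows "measure (PiM UNIV (\<lambda>_::nat. S))
      {\<omega> \<in> space (PiM UNIV (\<lambda>_::nat. S)). frequency n D \<omega> \<ge> measure S D + \<eta>}
    \<le> exp (- 2 * real (Suc n) * \<eta>\<^sup>2)"
proof -
  interpret PS: product_prob_space "\<lambda>_::nat. S" UNIV
    using S by (simp add: product_prob_space_def product_prob_space_axioms_def
      product_sigma_finite_def prob_space_imp_sigma_finite)
  define M where "M = PiM UNIV (\<lambda>_::nat. S)"
  interpret M: prob_space M unfolding M_def using S by (rule prob_space_PiM)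
  define X where "X = (\<lambda>i (\<omega>::nat \<Rightarrow> 'a). indicator D (\<omega> i) :: real)"
  have X_meas [measurable]: "X i \<in> borel_measurable M" for i
    unfolding X_def M_def using D by measurable
  have distr_X: "distr M borel (X i) = distr S borel (indicator D)" for i
  proof -
    have "distr M borel (X i) = distr (distr M S (\<lambda>\<omega>. \<omega> i)) borel (indicator D)"
      unfolding X_def M_def using D by (subst distr_distr) (auto simp: comp_def)
    also have "distr M S (\<lambda>\<omega>. \<omega> i) = S" unfolding M_def by (rule PS.PiM_component) simp
    finally show ?thesis .
  qed
  have indep: "M.indep_vars (\<lambda>_. borel) X {..n}"
    unfolding X_def M_def
    using prob_space.indep_vars_compose2[OF prob_space_PiM[OF S] indep_vars_coordinates[OF S],
        where Y = "\<lambda>_. indicator D" and N = "\<lambda>_. borel"] D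
    by auto
  have mean: "M.expectation (X 0) = measure S D"
  proof -
    have "M.expectation (X 0) = integral\<^sup>L (distr S borel (indicator D)) (\<lambda>x. x)"
      by (subst distr_X[symmetric], subst integral_distr) auto
    also have "\<dots> = measure S D" using D by (subst integral_distr) auto
    finally show ?thesis .
  qed
  interpret H: Hoeffding_ineq_iid M "{..n}" X "X 0" 0 1 "M.expectation (X 0)"
  proof unfold_locales
    show "M.indep_vars (\<lambda>_. borel) X {..n}" by (fact indep)
    show "distr M borel (X i) = distr M borel (X 0)" for i by (simp add: distr_X)
    show "AE x in M. X 0 x \<in> {0..1}" by (simp add: X_def)
  qed simp_all
  show ?thesis
    using H.Hoeffding_ineq_ge'[OF \<open>\<eta> \<ge> 0\<close>] mean unfolding M_def X_def frequency_def by simp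
qed

lemma card_rare_le_suminf_indicator:
  assumes "\<forall>n \<ge> n0. P n \<omega> \<longrightarrow> \<omega> \<in> B n"
  shows "of_nat (card {n. n < t \<and> P n \<omega>}) \<le> of_nat n0 + (\<Sum>n. indicator (B n) \<omega> :: ennreal)"
proof -
  have "{n. n < t \<and> P n \<omega>} \<subseteq> {..<n0} \<union> {n \<in> {..<t}. \<omega> \<in> B n}"
    using assms by auto
  then have "card {n. n < t \<and> P n \<omega>} \<le> card ({..<n0} \<union> {n \<in> {..<t}. \<omega> \<in> B n})"
    by (intro card_mono) auto
  also have "\<dots> \<le> n0 + card {n \<in> {..<t}. \<omega> \<in> B n}"
    using card_Un_le[of "{..<n0}"] by simp
  finally have "of_nat (card {n. n < t \<and> P n \<omega>})
      \<le> of_nat n0 + (of_nat (card {n \<in> {..<t}. \<omega> \<in> B n}) :: ennreal)"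
    by (metis of_nat_add of_nat_mono)
  also have "of_nat (card {n \<in> {..<t}. \<omega> \<in> B n}) = (\<Sum>n<t. indicator (B n) \<omega> :: ennreal)"
    by (simp add: indicator_def sum.If_cases Int_def)
  also have "\<dots> \<le> (\<Sum>n. indicator (B n) \<omega>)"
    by (intro sum_le_suminf summableI) auto
  finally show ?thesis by (simp add: add_left_mono)
qed

lemma convergent_if_mono_dominated:
  fixes X :: "nat \<Rightarrow> 'a \<Rightarrow> nat"
  assumes mono: "\<And>\<omega> t t'. t \<le> t' \<Longrightarrow> X t \<omega> \<le> X t' \<omega>"
    and bound: "bound \<in> borel_measurable M" "integral\<^sup>N M bound < \<top>"
    and le_bound: "AE \<omega> in M. \<forall>t. of_nat (X t \<omega>) \<le> bound \<omega>"
  shows "(\<exists>L::real. (\<lambda>t. \<integral>\<^sup>+\<omega>. ennreal (real (X t \<omega>)) \<partial>M) \<longlonglongrightarrow> ennreal L)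
    \<and> (AE \<omega> in M. convergent (\<lambda>t. real (X t \<omega>)))"
proof
  define f where "f t = (\<integral>\<^sup>+\<omega>. of_nat (X t \<omega>) \<partial>M)" for t
  have "incseq f"
    unfolding incseq_def f_def by (auto intro!: nn_integral_mono mono)
  then have "f \<longlonglongrightarrow> (SUP t. f t)" by (rule LIMSEQ_SUP)
  moreover have "(SUP t. f t) \<le> integral\<^sup>N M bound"
    unfolding f_def using le_bound by (intro SUP_least nn_integral_mono_AE) auto
  then have "(SUP t. f t) < \<top>" using bound(2) by (rule le_less_trans)
  ultimately have "f \<longlonglongrightarrow> ennreal (enn2real (SUP t. f t))" by (simp add: less_top)
  then show "\<exists>L::real. (\<lambda>t. \<integral>\<^sup>+\<omega>. ennreal (real (X t \<omega>)) \<partial>M) \<longlonglongrightarrow> ennreal L"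
    unfolding f_def by (auto simp: ennreal_of_nat_eq_real_of_nat)
  have "AE \<omega> in M. bound \<omega> \<noteq> \<top>"
    using nn_integral_PInf_AE[OF bound(1)] bound(2) by (simp add: less_top)
  with le_bound show "AE \<omega> in M. convergent (\<lambda>t. real (X t \<omega>))"
  proof eventually_elim
    case (elim \<omega>)
    then have "real (X t \<omega>) \<le> enn2real (bound \<omega>)" for t
      using enn2real_mono[of "of_nat (X t \<omega>)" "bound \<omega>"] by (simp add: less_top)
    then have "Bseq (\<lambda>t. real (X t \<omega>))" by (intro BseqI'[of _ "enn2real (bound \<omega>)"]) simp
    moreover have "monoseq (\<lambda>t. real (X t \<omega>))"
      by (intro incseq_imp_monoseq) (auto simp: incseq_def mono)
    ultimately show ?case by (rule Bseq_monoseq_convergent)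
  qed
qed

lemma count_converges_if_rare:
  assumes "prob_space M"
    and B: "\<And>n. B n \<in> sets M" and sum_B: "(\<Sum>n. emeasure M (B n)) < \<top>"
    and rare: "AE \<omega> in M. \<forall>n \<ge> n0. P n \<omega> \<longrightarrow> \<omega> \<in> B n"
  shows "(\<exists>L::real. (\<lambda>t. \<integral>\<^sup>+\<omega>. ennreal (real (card {n. n < t \<and> P n \<omega>})) \<partial>M) \<longlonglongrightarrow> ennreal L)
    \<and> (AE \<omega> in M. convergent (\<lambda>t. real (card {n. n < t \<and> P n \<omega>})))"
proof (rule convergent_if_mono_dominated)
  interpret prob_space M by fact
  define bound where "bound \<omega> = of_nat n0 + (\<Sum>n. indicator (B n) \<omega> :: ennreal)" for \<omega>
  show "bound \<in> borel_measurable M" unfolding bound_def using B by measurable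
  have "integral\<^sup>N M bound = of_nat n0 + (\<Sum>n. emeasure M (B n))"
    unfolding bound_def using B by (subst nn_integral_add) (auto simp: nn_integral_suminf emeasure_space_1)
  then show "integral\<^sup>N M bound < \<top>"
    using sum_B by (simp add: less_top[symmetric])
  show "AE \<omega> in M. \<forall>t. of_nat (card {n. n < t \<and> P n \<omega>}) \<le> bound \<omega>"
    using rare unfolding bound_def by eventually_elim (blast intro: card_rare_le_suminf_indicator)
qed (auto intro: card_mono)

section \<open>The side-observation model and the plug-in rule\<close>

definition step_kernel :: "real set \<Rightarrow> (real \<Rightarrow> real \<Rightarrow> real measure) \<Rightarrow> real \<times> real \<Rightarrow> real
    \<Rightarrow> (real \<times> real \<times> real) measure" where
  "step_kernel Xs F C x = distr (Fk Xs F (fst C) x \<Otimes>\<^sub>M Fk Xs F (snd C) x) borel (\<lambda>(y1, y2). (x, y1, y2))"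

lemma step_law_eq_bind: "step_law Xs G F C = G C \<bind> step_kernel Xs F C"
  unfolding step_law_def step_kernel_def ..

lemma borel_measurable_fst [measurable]:
  "fst \<in> (borel :: ('a::topological_space \<times> 'b::topological_space) measure) \<rightarrow>\<^sub>M borel"
  by (intro borel_measurable_continuous_onI continuous_on_fst continuous_on_id)

lemma measurable_Pair_const_borel:
  assumes "sets M = sets (borel :: ('a::second_countable_topology \<times> 'a) measure)"
  shows "(\<lambda>(y1, y2). (x :: 'a, y1, y2)) \<in> M \<rightarrow>\<^sub>M borel"
proof -
  have "(\<lambda>y. (x, y)) \<in> (borel :: ('a \<times> 'a) measure) \<rightarrow>\<^sub>M borel"
    by (intro borel_measurable_continuous_onI continuous_intros)
  then show ?thesis using assms by (simp add: split_beta' cong: measurable_cong_sets)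
qed

definition plugin_rule :: "real set \<Rightarrow> real set \<Rightarrow> (real \<times> real \<Rightarrow> real measure)
    \<Rightarrow> (real \<Rightarrow> real \<Rightarrow> real measure) \<Rightarrow> nat \<Rightarrow> (nat \<Rightarrow> real) \<Rightarrow> (nat \<Rightarrow> real) \<Rightarrow> nat" where
  "plugin_rule Theta Xs G F t xs ys =
    (if xs t \<in> Xs \<and> fit_levels Theta G t (rounded_sample t xs) \<noteq> {}
     then pref_arm F (estimate Theta G t (rounded_sample t xs)) (xs t) else 1)"

lemma action_plugin_rule:
  "action (plugin_rule Theta Xs G F) \<omega> t = plugin_rule Theta Xs G F t (\<lambda>i. fst (\<omega> i)) (\<lambda>_. 0)"
proof -
  have "length (acts_upto phi \<omega> n) = n" for phi n by (induction n) (auto simp: Let_def)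
  then show ?thesis unfolding action_def by (simp add: Let_def nth_append plugin_rule_def)
qed

lemma rounded_sample_measurable:
  "rounded_sample t \<in> PiM UNIV (\<lambda>_::nat. (borel :: real measure)) \<rightarrow>\<^sub>M count_space UNIV"
proof (subst measurable_count_space_eq2_countable, safe)
  fix l :: "int list"
  have "rounded_sample t -` {l} \<inter> space (PiM UNIV (\<lambda>_::nat. borel)) =
     {xs \<in> space (PiM UNIV (\<lambda>_::nat. borel)). length l = Suc t \<and> (\<forall>i<Suc t. grid_floor t (xs i) = l ! i)}"
    by (auto simp: rounded_sample_def list_eq_iff_nth_eq simp del: upt_Suc)
  then show "rounded_sample t -` {l} \<inter> space (PiM UNIV (\<lambda>_::nat. borel)) \<in> sets (PiM UNIV (\<lambda>_::nat. borel))"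
    unfolding grid_floor_def by simp measurable
qed auto

lemma mu_measurable:
  assumes "F \<theta> \<in> restrict_space borel Xs \<rightarrow>\<^sub>M prob_algebra borel"
  shows "mu F \<theta> \<in> restrict_space borel Xs \<rightarrow>\<^sub>M borel"
proof -
  have "(\<lambda>M. integral\<^sup>L M (\<lambda>y::real. y)) \<in> subprob_algebra borel \<rightarrow>\<^sub>M borel"
    by (rule integral_measurable_subprob_algebra) simp
  from measurable_compose[OF measurable_prob_algebraD[OF assms] this]
  show ?thesis unfolding mu_def[abs_def] by simp
qed

locale side_observation_model =
  fixes Theta Xs :: "real set" and G :: "real \<times> real \<Rightarrow> real measure"
    and F :: "real \<Rightarrow> real \<Rightarrow> real measure"
  assumes Xs_borel: "Xs \<in> sets borel"
    and G_prob: "\<And>C. C \<in> Theta \<times> Theta \<Longrightarrow> prob_space (G C) \<and> sets (G C) = sets borel"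
    and G_on_Xs: "\<And>C. C \<in> Theta \<times> Theta \<Longrightarrow> emeasure (G C) Xs = 1"
    and F_kernel: "\<And>\<theta>. \<theta> \<in> Theta \<Longrightarrow> (\<lambda>x. F \<theta> x) \<in> restrict_space borel Xs \<rightarrow>\<^sub>M prob_algebra borel"
begin

lemma Fk_measurable: "\<theta> \<in> Theta \<Longrightarrow> Fk Xs F \<theta> \<in> borel \<rightarrow>\<^sub>M prob_algebra borel"
  unfolding Fk_def[abs_def] using Xs_borel F_kernel
  by (subst measurable_If_restrict_space_iff)
     (auto intro!: measurable_const simp: space_prob_algebra prob_space_return)

lemma
  assumes "\<theta> \<in> Theta"
  shows prob_space_Fk: "prob_space (Fk Xs F \<theta> x)" and sets_Fk: "sets (Fk Xs F \<theta> x) = sets borel"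
  using measurable_space[OF Fk_measurable[OF assms], of x] by (auto simp: space_prob_algebra)

lemma step_kernel_measurable:
  assumes "C \<in> Theta \<times> Theta"
  shows "step_kernel Xs F C \<in> borel \<rightarrow>\<^sub>M prob_algebra borel"
proof -
  note [measurable] = Fk_measurable[of "fst C"] Fk_measurable[of "snd C"]
  have "(\<lambda>x. Fk Xs F (fst C) x \<Otimes>\<^sub>M Fk Xs F (snd C) x) \<in> borel \<rightarrow>\<^sub>M prob_algebra (borel \<Otimes>\<^sub>M borel)"
    using assms by (cases C) measurable
  moreover have "(\<lambda>(x, y). (\<lambda>(y1, y2). (x, y1, y2)) y)
      \<in> (borel :: real measure) \<Otimes>\<^sub>M (borel \<Otimes>\<^sub>M borel) \<rightarrow>\<^sub>M (borel :: (real \<times> real \<times> real) measure)"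
    by (simp add: split_beta' measurable_pair_iff borel_prod[symmetric] cong: measurable_cong_sets)
  ultimately show ?thesis
    unfolding step_kernel_def[abs_def] by (rule measurable_distr_prob_space2)
qed

lemma distr_fst_step_kernel:
  assumes "C \<in> Theta \<times> Theta"
  shows "distr (step_kernel Xs F C x) borel fst = return borel x"
proof -
  interpret pair_prob_space "Fk Xs F (fst C) x" "Fk Xs F (snd C) x"
    using assms prob_space_Fk by (cases C) (auto simp: pair_prob_space_def pair_sigma_finite_def
      prob_space_imp_sigma_finite)
  have sets_pair: "sets (Fk Xs F (fst C) x \<Otimes>\<^sub>M Fk Xs F (snd C) x) = sets (borel :: (real \<times> real) measure)"
    using assms sets_Fk by (cases C) (simp add: borel_prod[symmetric] cong: sets_pair_measure_cong)
  have "distr (step_kernel Xs F C x) borel fst = distr (Fk Xs F (fst C) x \<Otimes>\<^sub>M Fk Xs F (snd C) x) borel (\<lambda>_. x)"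
    unfolding step_kernel_def using measurable_Pair_const_borel[OF sets_pair]
    by (subst distr_distr) (auto simp: comp_def split_beta')
  also have "\<dots> = return borel x" by simp
  finally show ?thesis .
qed

lemma
  assumes "C \<in> Theta \<times> Theta"
  shows prob_space_step_law: "prob_space (step_law Xs G F C)"
    and sets_step_law: "sets (step_law Xs G F C) = sets borel"
    and distr_fst_step_law: "distr (step_law Xs G F C) borel fst = G C"
proof -
  have G: "G C \<in> space (prob_algebra borel)" using G_prob[OF assms] by (simp add: space_prob_algebra)
  note K = step_kernel_measurable[OF assms]
  show "prob_space (step_law Xs G F C)" unfolding step_law_eq_bind by (rule prob_space_bind'[OF G K])
  show "sets (step_law Xs G F C) = sets borel" unfolding step_law_eq_bind by (rule sets_bind'[OF G K])
  have "distr (step_law Xs G F C) borel fst = G C \<bind> (\<lambda>x. distr (step_kernel Xs F C x) borel fst)"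
    unfolding step_law_eq_bind using G_prob[OF assms] measurable_prob_algebraD[OF K]
    by (intro distr_bind) (auto simp: prob_space.not_empty cong: measurable_cong_sets)
  also have "\<dots> = G C \<bind> return borel"
    using distr_fst_step_kernel[OF assms] by (intro bind_cong) auto
  also have "\<dots> = G C" using G_prob[OF assms] by (intro bind_return'') auto
  finally show "distr (step_law Xs G F C) borel fst = G C" .
qed

lemma prob_space_Omega: "C \<in> Theta \<times> Theta \<Longrightarrow> prob_space (Omega Xs G F C)"
  unfolding Omega_def by (intro prob_space_PiM prob_space_step_law)

lemma AE_Omega_in_Xs:
  assumes C0: "C0 \<in> Theta \<times> Theta"
  shows "AE \<omega> in Omega Xs G F C0. \<forall>n. fst (\<omega> n) \<in> Xs"
proof -
  interpret product_prob_space "\<lambda>_::nat. step_law Xs G F C0" UNIV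
    using prob_space_step_law[OF C0] by (simp add: product_prob_space_def product_prob_space_axioms_def
      product_sigma_finite_def prob_space_imp_sigma_finite)
  interpret G0: prob_space "G C0" using G_prob[OF C0] by simp
  have "AE x in G C0. x \<in> Xs"
    using G0.AE_in_set_eq_1[of Xs] G_on_Xs[OF C0] G_prob[OF C0] Xs_borel
    by (simp add: G0.emeasure_eq_measure)
  then have "AE s in step_law Xs G F C0. fst s \<in> Xs"
    using Xs_borel sets_step_law[OF C0]
    by (subst (asm) distr_fst_step_law[OF C0, symmetric], subst (asm) AE_distr_iff)
       (auto cong: measurable_cong_sets)
  then show ?thesis
    unfolding Omega_def AE_all_countable by (intro allI AE_component) auto
qed

lemma measurable_Omega_side_obs:
  assumes "C \<in> Theta \<times> Theta"
  shows "(\<lambda>\<omega>. fst (\<omega> i)) \<in> Omega Xs G F C \<rightarrow>\<^sub>M borel"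
proof -
  have "fst \<in> step_law Xs G F C \<rightarrow>\<^sub>M borel"
    using sets_step_law[OF assms] by (simp cong: measurable_cong_sets)
  from measurable_compose[OF measurable_component_singleton[of i UNIV] this] show ?thesis
    unfolding Omega_def by simp
qed

definition deviation :: "real \<times> real \<Rightarrow> real \<Rightarrow> nat \<Rightarrow> real set \<Rightarrow> (nat \<Rightarrow> real \<times> real \<times> real) set"
  where "deviation C \<eta> n D =
    {\<omega> \<in> space (Omega Xs G F C). frequency n D (\<lambda>i. fst (\<omega> i)) \<ge> measure (G C) D + \<eta>}"

lemma deviation_in_sets:
  assumes "C \<in> Theta \<times> Theta" and [measurable]: "D \<in> sets borel"
  shows "deviation C \<eta> n D \<in> sets (Omega Xs G F C)"
proof -
  note [measurable] = measurable_Omega_side_obs[OF assms(1)]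
  show ?thesis unfolding deviation_def frequency_def by measurable
qed

lemma prob_deviation_le:
  assumes C0: "C0 \<in> Theta \<times> Theta" and D: "D \<in> sets borel" and "\<eta> \<ge> 0"
  shows "measure (Omega Xs G F C0) (deviation C0 \<eta> n D) \<le> exp (- 2 * real (Suc n) * \<eta>\<^sup>2)"
proof -
  let ?S = "step_law Xs G F C0"
  have space_S: "space ?S = UNIV" using sets_eq_imp_space_eq[OF sets_step_law[OF C0]] by simp
  have fst_D: "fst -` D \<in> sets ?S"
    using D sets_step_law[OF C0] measurable_sets[OF borel_measurable_fst D] by simp
  have "measure ?S (fst -` D) = measure (G C0) D"
    using D sets_step_law[OF C0] space_S
    by (subst distr_fst_step_law[OF C0, symmetric], subst measure_distr) (auto cong: measurable_cong_sets)
  moreover have freq_eq: "frequency n D (\<lambda>i. fst (\<omega> i)) = frequency n (fst -` D) \<omega>" for \<omega>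
    by (simp add: frequency_def indicator_def)
  ultimately show ?thesis
    unfolding deviation_def freq_eq Omega_def using prob_frequency_ge[OF prob_space_step_law[OF C0] fst_D \<open>\<eta> \<ge> 0\<close>]
    by simp
qed

lemma pref_arm_measurable:
  assumes "C \<in> Theta \<times> Theta"
  shows "(\<lambda>x. if x \<in> Xs then pref_arm F C x else 1) \<in> borel \<rightarrow>\<^sub>M count_space UNIV"
proof (subst measurable_If_restrict_space_iff)
  have "fst C \<in> Theta" "snd C \<in> Theta" using assms by auto
  note [measurable] = mu_measurable[where F = F, OF F_kernel[OF this(1)]]
    mu_measurable[where F = F, OF F_kernel[OF this(2)]]
  have "pref_arm F C \<in> restrict_space borel Xs \<rightarrow>\<^sub>M count_space UNIV"
    unfolding pref_arm_def[abs_def] by measurable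
  then show "pref_arm F C \<in> restrict_space borel {x. x \<in> Xs} \<rightarrow>\<^sub>M count_space UNIV \<and>
      (\<lambda>x. 1) \<in> restrict_space borel {x. x \<notin> Xs} \<rightarrow>\<^sub>M count_space UNIV" by simp
qed (use Xs_borel in simp)

lemma allocation_rule_plugin_rule: "allocation_rule (plugin_rule Theta Xs G F)"
  unfolding allocation_rule_def
proof (intro conjI allI impI)
  fix t xs ys show "plugin_rule Theta Xs G F t xs ys \<in> {1, 2}"
    unfolding plugin_rule_def pref_arm_def by auto
next
  fix t :: nat and xs ys xs' ys' :: "nat \<Rightarrow> real"
  assume "(\<forall>i\<le>t. xs i = xs' i) \<and> (\<forall>i<t. ys i = ys' i)"
  then have "rounded_sample t xs = rounded_sample t xs'" "xs t = xs' t"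
    unfolding rounded_sample_def by (auto simp del: upt_Suc)
  then show "plugin_rule Theta Xs G F t xs ys = plugin_rule Theta Xs G F t xs' ys'"
    unfolding plugin_rule_def by simp
next
  fix t :: nat
  define rule where "rule l xs = (if xs t \<in> Xs \<and> fit_levels Theta G t l \<noteq> {}
    then pref_arm F (estimate Theta G t l) (xs t) else 1)" for l and xs :: "nat \<Rightarrow> real"
  have "rule l \<in> PiM UNIV (\<lambda>_::nat. borel) \<rightarrow>\<^sub>M count_space UNIV" for l
  proof (cases "fit_levels Theta G t l = {}")
    case False
    then have "rule l = (\<lambda>x. if x \<in> Xs then pref_arm F (estimate Theta G t l) x else 1) \<circ> (\<lambda>xs. xs t)"
      unfolding rule_def by (auto simp: fun_eq_iff)
    also have "\<dots> \<in> PiM UNIV (\<lambda>_::nat. borel) \<rightarrow>\<^sub>M count_space UNIV"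
      using estimate_fits[OF False] by (intro measurable_comp[OF _ pref_arm_measurable]) auto
    finally show ?thesis .
  qed (simp add: rule_def[abs_def])
  then have "(\<lambda>xs. rule (rounded_sample t xs) xs) \<in> PiM UNIV (\<lambda>_::nat. borel) \<rightarrow>\<^sub>M count_space UNIV"
    by (rule measurable_compose_countable[OF _ rounded_sample_measurable])
  then have "(\<lambda>p. rule (rounded_sample t (fst p)) (fst p))
      \<in> (PiM UNIV (\<lambda>_::nat. borel) \<Otimes>\<^sub>M PiM UNIV (\<lambda>_::nat. borel)) \<rightarrow>\<^sub>M count_space UNIV"
    by (rule measurable_compose[OF measurable_fst])
  then show "(\<lambda>(xs, ys). plugin_rule Theta Xs G F t xs ys)
      \<in> (PiM UNIV (\<lambda>_::nat. borel) \<Otimes>\<^sub>M PiM UNIV (\<lambda>_::nat. borel)) \<rightarrow>\<^sub>M count_space UNIV"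
    by (simp add: rule_def plugin_rule_def split_beta')
qed

lemma plugin_rule_correct:
  assumes C0: "C0 \<in> Theta \<times> Theta"
    and sep: "\<forall>Ce \<in> Theta \<times> Theta. (\<exists>x\<in>Xs. pref_arm F Ce x \<noteq> pref_arm F C0 x)
                \<longrightarrow> prohorov (G C0) (G Ce) \<ge> \<delta>"
    and J: "1 \<le> J" "2 / real J < \<delta>" "J \<le> n"
    and w: "w = 1 / (2 * real J)" "1 / real (Suc n) \<le> w"
    and tail: "measure (G C0) (grid_tail w N) \<le> w"
    and eta: "\<eta> \<ge> 0" "real (2 * N + 2) * \<eta> \<le> w"
    and freq: "\<And>D. D \<in> grid_partition w N \<Longrightarrow>
      frequency n D xs \<le> measure (G C0) D + \<eta>"
    and "xs n \<in> Xs"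
  shows "plugin_rule Theta Xs G F n xs ys = pref_arm F C0 (xs n)"
proof -
  have "w > 0" using w J by simp
  then have fit: "fits G C0 n (rounded_sample n xs) (1 / real J)"
    using empirical_rounded_sample_le[OF _ _ _ w(2) tail eta freq] G_prob[OF C0] w(1)
    unfolding fits_def by auto
  have est: "fit_levels Theta G n (rounded_sample n xs) \<noteq> {}"
      "estimate Theta G n (rounded_sample n xs) \<in> Theta \<times> Theta"
      "prohorov (G C0) (G (estimate Theta G n (rounded_sample n xs))) \<le> 2 / real J"
    using prohorov_estimate_le[where G = G, OF G_prob C0 J(1,3) fit]
    by (simp_all add: rounded_sample_def del: upt_Suc)
  with sep J(2) \<open>xs n \<in> Xs\<close>
  have "pref_arm F (estimate Theta G n (rounded_sample n xs)) (xs n) = pref_arm F C0 (xs n)"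
    by force
  with est(1) \<open>xs n \<in> Xs\<close> show ?thesis unfolding plugin_rule_def by simp
qed

lemma emeasure_deviations_le:
  assumes C0: "C0 \<in> Theta \<times> Theta" and Ds: "finite Ds" "Ds \<subseteq> sets borel" and "\<eta> \<ge> 0"
  shows "emeasure (Omega Xs G F C0) (\<Union>D\<in>Ds. deviation C0 \<eta> n D)
    \<le> ennreal (real (card Ds) * exp (- 2 * \<eta>\<^sup>2) ^ Suc n)"
proof -
  let ?M = "Omega Xs G F C0"
  interpret prob_space ?M using C0 by (rule prob_space_Omega)
  have "exp (- 2 * real (Suc n) * \<eta>\<^sup>2) = exp (- 2 * \<eta>\<^sup>2) ^ Suc n"
    unfolding exp_of_nat_mult[symmetric] by (simp add: algebra_simps)
  then have deviation_le: "emeasure ?M (deviation C0 \<eta> n D) \<le> ennreal (exp (- 2 * \<eta>\<^sup>2) ^ Suc n)"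
    if "D \<in> Ds" for D
    using prob_deviation_le[OF C0, of D \<eta> n] that Ds \<open>\<eta> \<ge> 0\<close>
    by (auto simp: emeasure_eq_measure intro: ennreal_leI)
  have "emeasure ?M (\<Union>D\<in>Ds. deviation C0 \<eta> n D) \<le> (\<Sum>D\<in>Ds. emeasure ?M (deviation C0 \<eta> n D))"
    by (rule emeasure_subadditive_finite[OF Ds(1)]) (use deviation_in_sets[OF C0] Ds(2) in blast)
  also have "\<dots> \<le> (\<Sum>D\<in>Ds. ennreal (exp (- 2 * \<eta>\<^sup>2) ^ Suc n))" by (intro sum_mono deviation_le)
  finally show ?thesis by (simp add: ennreal_of_nat_eq_real_of_nat ennreal_mult)
qed

lemma deviations_summable:
  assumes C0: "C0 \<in> Theta \<times> Theta" and Ds: "finite Ds" "Ds \<subseteq> sets borel" and "\<eta> > 0"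
  shows "(\<Sum>n. emeasure (Omega Xs G F C0) (\<Union>D\<in>Ds. deviation C0 \<eta> n D)) < \<top>"
proof -
  define q where "q = exp (- 2 * \<eta>\<^sup>2)"
  have q: "0 < q" "q < 1" using \<open>\<eta> > 0\<close> by (auto simp: q_def)
  have "summable (\<lambda>n. real (card Ds) * q * q ^ n)"
    using q by (intro summable_mult summable_geometric) simp
  then have "summable (\<lambda>n. real (card Ds) * q ^ Suc n)" by (simp add: mult.assoc)
  then have "(\<Sum>n. ennreal (real (card Ds) * q ^ Suc n)) \<noteq> \<top>"
    by (rule ennreal_suminf_neq_top) (use q in simp)
  moreover have "(\<Sum>n. emeasure (Omega Xs G F C0) (\<Union>D\<in>Ds. deviation C0 \<eta> n D))
      \<le> (\<Sum>n. ennreal (real (card Ds) * q ^ Suc n))"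
    unfolding q_def using emeasure_deviations_le[OF C0 Ds] \<open>\<eta> > 0\<close> by (intro suminf_le summableI) auto
  ultimately show ?thesis by (simp add: top.not_eq_extremum order.strict_trans1)
qed

lemma inferior_pull_imp_deviation:
  assumes C0: "C0 \<in> Theta \<times> Theta"
    and sep: "\<forall>Ce \<in> Theta \<times> Theta. (\<exists>x\<in>Xs. pref_arm F Ce x \<noteq> pref_arm F C0 x)
                \<longrightarrow> prohorov (G C0) (G Ce) \<ge> \<delta>"
    and J: "1 \<le> J" "2 / real J < \<delta>" and w: "w = 1 / (2 * real J)"
    and tail: "measure (G C0) (grid_tail w N) \<le> w"
    and \<eta>: "\<eta> \<ge> 0" "real (2 * N + 2) * \<eta> \<le> w"
    and n: "J + nat \<lceil>1 / w\<rceil> \<le> n"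
    and \<omega>: "\<omega> \<in> space (Omega Xs G F C0)" "fst (\<omega> n) \<in> Xs"
    and inferior: "action (plugin_rule Theta Xs G F) \<omega> n \<noteq> pref_arm F C0 (fst (\<omega> n))"
  shows "\<omega> \<in> (\<Union>D\<in>grid_partition w N. deviation C0 \<eta> n D)"
proof (rule ccontr)
  assume "\<omega> \<notin> (\<Union>D\<in>grid_partition w N. deviation C0 \<eta> n D)"
  then have "\<not> measure (G C0) D + \<eta> \<le> frequency n D (\<lambda>i. fst (\<omega> i))" if "D \<in> grid_partition w N" for D
    using that \<omega>(1) unfolding deviation_def by blast
  then have freq: "frequency n D (\<lambda>i. fst (\<omega> i)) \<le> measure (G C0) D + \<eta>"
    if "D \<in> grid_partition w N" for D
    using that by force
  have "w > 0" using J w by simp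
  have "1 / w \<le> real n" using n by linarith
  then have "1 / real (Suc n) \<le> w" using \<open>w > 0\<close> by (simp add: field_simps)
  with n have "plugin_rule Theta Xs G F n (\<lambda>i. fst (\<omega> i)) (\<lambda>_. 0) = pref_arm F C0 (fst (\<omega> n))"
    by (intro plugin_rule_correct[OF C0 sep J _ w _ tail \<eta> freq \<omega>(2)]) auto
  with inferior show False by (simp add: action_plugin_rule)
qed

lemma T_inf_plugin_rule_converges:
  assumes C0: "C0 \<in> Theta \<times> Theta"
    and "\<exists>\<delta>>0. \<forall>Ce \<in> Theta \<times> Theta. (\<exists>x\<in>Xs. pref_arm F Ce x \<noteq> pref_arm F C0 x)
                \<longrightarrow> prohorov (G C0) (G Ce) \<ge> \<delta>"
  shows "(\<exists>L::real. (\<lambda>t. \<integral>\<^sup>+\<omega>. ennreal (real (T_inf F C0 (plugin_rule Theta Xs G F) t \<omega>))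
            \<partial>Omega Xs G F C0) \<longlonglongrightarrow> ennreal L)
    \<and> (AE \<omega> in Omega Xs G F C0. convergent (\<lambda>t. real (T_inf F C0 (plugin_rule Theta Xs G F) t \<omega>)))"
proof -
  obtain \<delta> where "\<delta> > 0" and sep: "\<forall>Ce \<in> Theta \<times> Theta. (\<exists>x\<in>Xs. pref_arm F Ce x \<noteq> pref_arm F C0 x)
      \<longrightarrow> prohorov (G C0) (G Ce) \<ge> \<delta>"
    using assms(2) by blast
  have "finite_measure (G C0)" "sets (G C0) = sets borel"
    using G_prob[OF C0] by (auto intro: prob_space.finite_measure)
  then obtain J N w \<eta> where J: "1 \<le> J" "2 / real J < \<delta>" and w: "w = 1 / (2 * real J)"
    and tail: "measure (G C0) (grid_tail w N) \<le> w" and \<eta>: "\<eta> > 0" "real (2 * N + 2) * \<eta> \<le> w"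
    using \<open>\<delta> > 0\<close> by (rule grid_parameters_exist)
  let ?B = "\<lambda>n. \<Union>D\<in>grid_partition w N. deviation C0 \<eta> n D"
  have "AE \<omega> in Omega Xs G F C0. \<forall>n \<ge> J + nat \<lceil>1 / w\<rceil>.
      action (plugin_rule Theta Xs G F) \<omega> n \<noteq> pref_arm F C0 (fst (\<omega> n)) \<longrightarrow> \<omega> \<in> ?B n"
    using AE_Omega_in_Xs[OF C0] AE_space
  proof eventually_elim
    case (elim \<omega>)
    then show ?case
      by (intro allI impI inferior_pull_imp_deviation[OF C0 sep J w tail less_imp_le[OF \<eta>(1)] \<eta>(2)])
        auto
  qed
  moreover have "?B n \<in> sets (Omega Xs G F C0)" for n
    by (intro sets.finite_UN finite_grid_partition deviation_in_sets[OF C0])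
      (use grid_partition_subset_borel in blast)
  ultimately show ?thesis
    unfolding T_inf_def
    by (intro count_converges_if_rare[OF prob_space_Omega[OF C0], where B = ?B]
        deviations_summable[OF C0 finite_grid_partition grid_partition_subset_borel \<eta>(1)])
qed

end

theorem theorem3:
  fixes Theta Xs :: "real set"
    and G :: "real \<times> real \<Rightarrow> real measure"
    and F :: "real \<Rightarrow> real \<Rightarrow> real measure"
  assumes Xs_borel: "Xs \<in> sets borel"
    and G_prob: "\<And>C. C \<in> Theta \<times> Theta \<Longrightarrow> prob_space (G C) \<and> sets (G C) = sets borel"
    and G_on_Xs: "\<And>C. C \<in> Theta \<times> Theta \<Longrightarrow> emeasure (G C) Xs = 1"
    and F_kernel: "\<And>\<theta>. \<theta> \<in> Theta \<Longrightarrow>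
                     (\<lambda>x. F \<theta> x) \<in> restrict_space borel Xs \<rightarrow>\<^sub>M prob_algebra borel"
    and F_mean: "\<And>\<theta> x. \<theta> \<in> Theta \<Longrightarrow> x \<in> Xs \<Longrightarrow> integrable (F \<theta> x) (\<lambda>y. y)"
    and ident: "\<And>C1 C2. C1 \<in> Theta \<times> Theta \<Longrightarrow> C2 \<in> Theta \<times> Theta \<Longrightarrow>
                   G C1 = G C2 \<longleftrightarrow> C1 = C2"
    and sep: "\<And>C0. C0 \<in> Theta \<times> Theta \<Longrightarrow>
               \<exists>\<delta>>0. \<forall>Ce \<in> Theta \<times> Theta. (\<exists>x\<in>Xs. pref_arm F Ce x \<noteq> pref_arm F C0 x)
                        \<longrightarrow> prohorov (G C0) (G Ce) \<ge> \<delta>"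
  shows "\<exists>phi. allocation_rule phi \<and>
           (\<forall>C0 \<in> Theta \<times> Theta.
              (\<exists>L::real. (\<lambda>t. \<integral>\<^sup>+\<omega>. ennreal (real (T_inf F C0 phi t \<omega>)) \<partial>Omega Xs G F C0)
                          \<longlonglongrightarrow> ennreal L) \<and>
              (AE \<omega> in Omega Xs G F C0. convergent (\<lambda>t. real (T_inf F C0 phi t \<omega>))))"
proof -
  interpret side_observation_model Theta Xs G F
    using Xs_borel G_prob G_on_Xs F_kernel by unfold_locales
  show ?thesis
    by (intro exI[of _ "plugin_rule Theta Xs G F"] conjI[OF allocation_rule_plugin_rule] ballI
        T_inf_plugin_rule_converges sep) assumption+
qed

end
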